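(* Let $s>0$ and let $(X,d)$ be a compact monotone metric space with $\mathcal{H}^s(X)>0$. Then there exists an $s$-Hölder function $g:X\to\mathbb{R}$ such that $g(X)$ is a non-degenerate closed interval.
   Context: A metric space $(X,d)$ is monotone if there exist a linear order $<$ on $X$ and a constant $C$ such that $\operatorname{diam}([a,b])\le C\,d(a,b)$ for all $a,b\in X$, where $[a,b]=\{x\in X: a\le x\le b\}$; it is then called $C$-monotone. $\mathcal{H}^s$ denotes the $s$-dimensional Hausdorff measure. A function $g$ is $s$-Hölder if there is $K$ with $|g(a)-g(b)|\le K\,d(a,b)^s$ for all $a,b$. *)

theory Defs
  imports "HOL-Analysis.Analysis"
begin

definition order_interval :: "'a rel \<Rightarrow> 'a set \<Rightarrow> 'a \<Rightarrow> 'a \<Rightarrow> 'a set" where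
  "order_interval r X a b = {x \<in> X. (a, x) \<in> r \<and> (x, b) \<in> r}"

definition monotone_metric :: "'a::metric_space set \<Rightarrow> bool" where
  "monotone_metric X \<longleftrightarrow> (\<exists>r C. linear_order_on X r \<and>
      (\<forall>a\<in>X. \<forall>b\<in>X. diameter (order_interval r X a b) \<le> C * dist a b))"

definition hausdorff_pre :: "real \<Rightarrow> real \<Rightarrow> 'a::metric_space set \<Rightarrow> ennreal" where
  "hausdorff_pre s \<delta> A = (INF U \<in> {U :: nat \<Rightarrow> 'a set. A \<subseteq> (\<Union>i. U i) \<and>
       (\<forall>i. bounded (U i) \<and> diameter (U i) \<le> \<delta>)}. (\<Sum>i. ennreal (diameter (U i) powr s)))"

definition hausdorff_measure :: "real \<Rightarrow> 'a::metric_space set \<Rightarrow> ennreal" where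
  "hausdorff_measure s A = (SUP \<delta> \<in> {0<..}. hausdorff_pre s \<delta> A)"

definition holder_on :: "real \<Rightarrow> 'a::metric_space set \<Rightarrow> ('a \<Rightarrow> real) \<Rightarrow> bool" where
  "holder_on s X g \<longleftrightarrow> (\<exists>K. \<forall>a\<in>X. \<forall>b\<in>X. \<bar>g a - g b\<bar> \<le> K * dist a b powr s)"

end

theory Submission
  imports Defs
begin

(* Fix a linear order r witnessing that the compact space X is C-monotone and let
   \<nu> be the Hausdorff content of exponent s at the fixed scale diameter X (the pre-measure
   hausdorff_pre s (diameter X)).  It is finite on subsets of X, and it is positive on X because
   H^s(X) > 0.  The candidate is the distribution function g(x) = \<nu>({y \<in> X. y \<le> x}).
   (1) Since {y \<le> b} is covered by {y \<le> a} together with the half-open order interval (a,b],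
       g is increasing and g b - g a \<le> diam((a,b])^s \<le> (C d(a,b))^s, so g is s-Hoelder.
   (2) Up-rays of a monotone order are closed, so every nonempty closed subset of X has a least
       and a greatest element.  If some value t between g(min X) = 0 and g(max X) = \<nu> X > 0 were
       missed, the greatest a with g a \<le> t and the least b with g b \<ge> t would satisfy
       (a,b] \<subseteq> {b}, and the increment bound would force g b \<le> g a, a contradiction.
   The file first collects the properties of the content \<nu>, then the order-theoretic facts about
   monotone spaces, then the two abstract statements (1) and (2) about functions whose increments
   are controlled by order intervals; the theorem combines them. *)

section \<open>Hausdorff content at a fixed scale\<close>

lemma hausdorff_pre_mono: "A \<subseteq> B \<Longrightarrow> hausdorff_pre s \<delta> A \<le> hausdorff_pre s \<delta> B"
  unfolding hausdorff_pre_def by (rule INF_superset_mono) auto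

lemma hausdorff_pre_empty:
  assumes "\<delta> \<ge> 0"
  shows "hausdorff_pre s \<delta> {} = 0"
proof -
  have "hausdorff_pre s \<delta> {} \<le> (\<Sum>i. ennreal (diameter ((\<lambda>i. {}::'a set) i) powr s))"
    unfolding hausdorff_pre_def by (rule INF_lower2[of "\<lambda>i. {}"]) (auto simp: assms)
  then show ?thesis by simp
qed

text \<open>Adding one admissible set to a set raises the content by at most that set's contribution.
  This is the only form of subadditivity the argument needs.\<close>

lemma hausdorff_pre_union_le:
  fixes A B :: "'a::metric_space set"
  assumes "bounded B" "diameter B \<le> \<delta>"
  shows "hausdorff_pre s \<delta> (A \<union> B) \<le> hausdorff_pre s \<delta> A + ennreal (diameter B powr s)"
proof -
  define I where "I = {U :: nat \<Rightarrow> 'a set. A \<subseteq> (\<Union>i. U i) \<and>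
       (\<forall>i. bounded (U i) \<and> diameter (U i) \<le> \<delta>)}"
  define F where "F U = (\<Sum>i. ennreal (diameter (U i) powr s))" for U :: "nat \<Rightarrow> 'a set"
  define c where "c = ennreal (diameter B powr s)"
  have pA: "hausdorff_pre s \<delta> A = (INF U\<in>I. F U)"
    unfolding hausdorff_pre_def I_def F_def ..
  show ?thesis
  proof (cases "I = {}")
    case True
    then show ?thesis using pA by simp
  next
    case False
    have cover: "hausdorff_pre s \<delta> (A \<union> B) \<le> c + F U" if U: "U \<in> I" for U
    proof -
      define V where "V = case_nat B U"
      have "V \<in> {U. A \<union> B \<subseteq> (\<Union>i. U i) \<and> (\<forall>i. bounded (U i) \<and> diameter (U i) \<le> \<delta>)}"
      proof (intro CollectI conjI allI)
        have "A \<subseteq> (\<Union>i. V (Suc i))" "B \<subseteq> V 0"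
          using U unfolding I_def V_def by auto
        then show "A \<union> B \<subseteq> (\<Union>i. V i)" by blast
        fix i show "bounded (V i)" "diameter (V i) \<le> \<delta>"
          using U assms unfolding I_def V_def by (cases i; simp)+
      qed
      then have "hausdorff_pre s \<delta> (A \<union> B) \<le> F V"
        unfolding hausdorff_pre_def F_def by (rule INF_lower)
      also have "F V = c + F U"
      proof -
        let ?f = "\<lambda>i. ennreal (diameter (V i) powr s)"
        have "(\<lambda>n. ?f (Suc n)) sums (\<Sum>i. ?f (Suc i))" by (rule summable_sums[OF summableI])
        then have "?f sums ((\<Sum>i. ?f (Suc i)) + ?f 0)" by (rule sums_Suc)
        then show ?thesis by (simp add: F_def sums_iff add.commute V_def c_def)
      qed
      finally show ?thesis .
    qed
    have "c + Inf (F ` I) = Inf ((\<lambda>x. c + x) ` (F ` I))"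
      by (rule continuous_at_Inf_mono)
        (auto simp: mono_def add_left_mono False bdd_below_def
          intro!: continuous_add continuous_const continuous_ident)
    then have "c + hausdorff_pre s \<delta> A = (INF U\<in>I. c + F U)"
      unfolding pA by (simp add: image_image)
    moreover have "hausdorff_pre s \<delta> (A \<union> B) \<le> (INF U\<in>I. c + F U)"
      by (rule INF_greatest) (rule cover)
    ultimately show ?thesis by (simp add: c_def add.commute)
  qed
qed

lemma hausdorff_pre_le_diameter:
  fixes B :: "'a::metric_space set"
  assumes "bounded B" "diameter B \<le> \<delta>"
  shows "hausdorff_pre s \<delta> B \<le> ennreal (diameter B powr s)"
  using hausdorff_pre_union_le[OF assms, where A="{}" and s=s]
  by (simp add: hausdorff_pre_empty[OF order_trans[OF diameter_ge_0[OF assms(1)] assms(2)]])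

text \<open>If the content of X at some scale vanished, it would vanish at every scale: a cover with
  total contribution below \<delta>^s consists of sets of diameter below \<delta>.\<close>

lemma hausdorff_pre_pos:
  fixes X :: "'a::metric_space set"
  assumes s: "s > 0" and H: "hausdorff_measure s X > 0"
  shows "hausdorff_pre s D X > 0"
proof (rule ccontr)
  assume "\<not> hausdorff_pre s D X > 0"
  then have zero: "hausdorff_pre s D X = 0" by (simp add: not_gr_zero)
  have "hausdorff_pre s \<delta> X = 0" if d: "\<delta> > 0" for \<delta> :: real
  proof -
    have "hausdorff_pre s \<delta> X \<le> 0 + ennreal e" if e: "0 < e" for e :: real
    proof -
      define \<eta> where "\<eta> = min e (\<delta> powr s)"
      have "hausdorff_pre s D X < ennreal \<eta>" using zero e d by (simp add: \<eta>_def)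
      then obtain U where U: "X \<subseteq> (\<Union>i. U i)" "\<forall>i. bounded (U i) \<and> diameter (U i) \<le> D"
        and sU: "(\<Sum>i. ennreal (diameter (U i) powr s)) < ennreal \<eta>"
        unfolding hausdorff_pre_def INF_less_iff by blast
      have small: "diameter (U i) \<le> \<delta>" for i
      proof (rule ccontr)
        assume "\<not> diameter (U i) \<le> \<delta>"
        then have "\<delta> powr s \<le> diameter (U i) powr s"
          using d s by (intro powr_mono2) auto
        moreover have "diameter (U i) powr s < \<eta>"
          using ennreal_suminf_lessD[OF sU] by (simp add: ennreal_less_iff)
        ultimately show False unfolding \<eta>_def by linarith
      qed
      have "hausdorff_pre s \<delta> X \<le> (\<Sum>i. ennreal (diameter (U i) powr s))"
        unfolding hausdorff_pre_def by (rule INF_lower) (use U small in auto)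
      also have "\<dots> \<le> ennreal \<eta>" using sU by simp
      also have "\<dots> \<le> 0 + ennreal e" unfolding \<eta>_def by (simp add: ennreal_leI)
      finally show ?thesis .
    qed
    then have "hausdorff_pre s \<delta> X \<le> 0" by (rule ennreal_le_epsilon)
    then show ?thesis by simp
  qed
  then have "hausdorff_measure s X = 0"
    unfolding hausdorff_measure_def by simp
  then show False using H by simp
qed

section \<open>Linear orders compatible with the metric\<close>

definition order_monotone :: "'a rel \<Rightarrow> real \<Rightarrow> 'a::metric_space set \<Rightarrow> bool" where
  "order_monotone r C X \<longleftrightarrow> (\<forall>a\<in>X. \<forall>b\<in>X. diameter (order_interval r X a b) \<le> C * dist a b)"

lemma monotone_metricE:
  assumes "monotone_metric X"
  obtains r C where "linear_order_on X r" "C \<ge> 0" "order_monotone r C X"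
proof -
  obtain r C where lin: "linear_order_on X r"
    and mon: "\<forall>a\<in>X. \<forall>b\<in>X. diameter (order_interval r X a b) \<le> C * dist a b"
    using assms unfolding monotone_metric_def by blast
  have "order_monotone r (max C 0) X"
    unfolding order_monotone_def
  proof (intro ballI)
    fix a b assume "a \<in> X" "b \<in> X"
    then have "diameter (order_interval r X a b) \<le> C * dist a b" using mon by blast
    also have "\<dots> \<le> max C 0 * dist a b" by (intro mult_right_mono) auto
    finally show "diameter (order_interval r X a b) \<le> max C 0 * dist a b" .
  qed
  then show ?thesis by (rule that[OF lin, rotated]) simp
qed

text \<open>Reversing the order preserves monotonicity; this turns greatest elements into least ones.\<close>

lemma order_monotone_converse: "order_monotone (r\<inverse>) C X \<longleftrightarrow> order_monotone r C X"
proof -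
  have "order_interval (r\<inverse>) X a b = order_interval r X b a" for a b
    unfolding order_interval_def by auto
  then show ?thesis unfolding order_monotone_def by (metis dist_commute)
qed

lemma linear_order_onD:
  assumes "linear_order_on X r"
  shows "trans r" "\<forall>x\<in>X. (x,x)\<in>r" "total_on X r" "antisym r"
  using assms unfolding linear_order_on_def partial_order_on_def preorder_on_def refl_on_def
  by simp_all

lemma linear_order_on_flip:
  assumes "linear_order_on X r" "a \<in> X" "b \<in> X" "(a, b) \<notin> r"
  shows "(b, a) \<in> r"
  using assms linear_order_onD(2,3)[OF assms(1)] unfolding total_on_def by metis

text \<open>Up-rays \{y. x \<le> y\} are closed: if y_n \<ge> x converge to l < x, then x lies in the order
  interval [l, y_n], whence d(x,l) \<le> C d(l,y_n) \<rightarrow> 0.\<close>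

lemma up_ray_closed:
  fixes X :: "'a::metric_space set"
  assumes lin: "linear_order_on X r" and cX: "compact X" and mon: "order_monotone r C X"
    and x: "x \<in> X"
  shows "closed {y\<in>X. (x,y)\<in>r}"
proof (unfold closed_sequential_limits, intro allI impI, elim conjE)
  fix f l assume f: "\<forall>n. f n \<in> {y \<in> X. (x, y) \<in> r}" and lim: "f \<longlonglongrightarrow> l"
  have lX: "l \<in> X" using closed_sequentially[OF compact_imp_closed[OF cX]] f lim by auto
  show "l \<in> {y \<in> X. (x, y) \<in> r}"
  proof (rule ccontr)
    assume "l \<notin> {y \<in> X. (x, y) \<in> r}"
    then have nl: "(x,l) \<notin> r" using lX by auto
    have xl: "x \<noteq> l" using nl linear_order_onD(2)[OF lin] lX by auto
    have lx: "(l,x) \<in> r" using linear_order_on_flip[OF lin x lX nl] .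
    have bd: "dist x l \<le> C * dist (f n) l" for n
    proof -
      have fn: "f n \<in> X" "(x, f n) \<in> r" using f by auto
      have "x \<in> order_interval r X l (f n)" "l \<in> order_interval r X l (f n)"
        using fn lx x lX linear_order_onD(2)[OF lin] transD[OF linear_order_onD(1)[OF lin], of l x "f n"]
        unfolding order_interval_def by simp_all
      moreover have "bounded (order_interval r X l (f n))"
        using compact_imp_bounded[OF cX] by (rule bounded_subset) (auto simp: order_interval_def)
      ultimately have "dist x l \<le> diameter (order_interval r X l (f n))"
        by (intro diameter_bounded_bound) auto
      also have "\<dots> \<le> C * dist l (f n)" using mon lX fn(1) unfolding order_monotone_def by blast
      finally show ?thesis by (simp add: dist_commute)
    qed
    have "(\<lambda>n. C * dist (f n) l) \<longlonglongrightarrow> 0"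
      using tendsto_dist_iff[THEN iffD1, OF lim] by (rule tendsto_mult_right_zero)
    then have "dist x l \<le> 0" by (rule LIMSEQ_le_const) (use bd in blast)
    then show False using xl by simp
  qed
qed

lemma finite_has_greatest_rel:
  assumes lin: "linear_order_on X r" and "finite S" "S \<noteq> {}" "S \<subseteq> X"
  shows "\<exists>m\<in>S. \<forall>x\<in>S. (x, m) \<in> r"
  using assms(2-4)
proof (induction S rule: finite_ne_induct)
  case (singleton x)
  then show ?case using linear_order_onD(2)[OF lin] by simp
next
  case (insert x F)
  obtain m where m: "m \<in> F" "\<forall>y\<in>F. (y, m) \<in> r" using insert by blast
  have xX: "x \<in> X" and mX: "m \<in> X" using insert.prems m(1) by auto
  show ?case
  proof (cases "(x, m) \<in> r")
    case True
    then show ?thesis using m by blast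
  next
    case False
    then have "(m, x) \<in> r" by (rule linear_order_on_flip[OF lin xX mX])
    then have "\<forall>y\<in>insert x F. (y,x)\<in>r"
      using m(2) transD[OF linear_order_onD(1)[OF lin]] linear_order_onD(2)[OF lin] xX by blast
    then show ?thesis by blast
  qed
qed

text \<open>Every nonempty closed subset of a compact monotone space has a greatest element: the closed
  up-rays of its points have the finite intersection property.\<close>

lemma closed_has_greatest:
  fixes X :: "'a::metric_space set"
  assumes lin: "linear_order_on X r" and cX: "compact X" and mon: "order_monotone r C X"
    and A: "closed A" "A \<subseteq> X" "A \<noteq> {}"
  shows "\<exists>a\<in>A. \<forall>y\<in>A. (y,a)\<in>r"
proof -
  have cA: "compact A" using A cX compact_Int_closed[of X A] by (simp add: Int_absorb1)
  let ?F = "(\<lambda>x. {y\<in>X. (x,y)\<in>r}) ` A"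
  have "A \<inter> \<Inter> ?F \<noteq> {}"
  proof (rule compact_imp_fip[OF cA])
    show "\<And>T. T \<in> ?F \<Longrightarrow> closed T" using up_ray_closed[OF lin cX mon] A by auto
  next
    fix F' assume F': "finite F'" "F' \<subseteq> ?F"
    then obtain S where S: "S \<subseteq> A" "finite S" "F' = (\<lambda>x. {y\<in>X. (x,y)\<in>r}) ` S"
      by (meson finite_subset_image)
    show "A \<inter> \<Inter> F' \<noteq> {}"
    proof (cases "S = {}")
      case True then show ?thesis using S A by auto
    next
      case False
      obtain m where "m \<in> S" "\<forall>x\<in>S. (x, m) \<in> r"
        using finite_has_greatest_rel[OF lin S(2) False] S A by auto
      then have "m \<in> A \<inter> \<Inter> F'" using S A by auto
      then show ?thesis by blast
    qed
  qed
  then show ?thesis by auto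
qed

lemma closed_has_least:
  fixes X :: "'a::metric_space set"
  assumes lin: "linear_order_on X r" and cX: "compact X" and mon: "order_monotone r C X"
    and A: "closed A" "A \<subseteq> X" "A \<noteq> {}"
  shows "\<exists>a\<in>A. \<forall>y\<in>A. (a,y)\<in>r"
  using closed_has_greatest[of X "r\<inverse>", OF _ cX _ A] lin mon
  by (simp add: linear_order_on_converse order_monotone_converse)

section \<open>Functions with increments controlled by order intervals\<close>

text \<open>Hoelder functions of positive exponent are continuous; needed to see that sub- and
  super-level sets are closed.\<close>

lemma holder_imp_continuous_on:
  fixes g :: "'a::metric_space \<Rightarrow> real"
  assumes s: "s > 0" and K: "K \<ge> 0"
    and h: "\<forall>a\<in>X. \<forall>b\<in>X. \<bar>g a - g b\<bar> \<le> K * dist a b powr s"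
  shows "continuous_on X g"
  unfolding continuous_on_iff
proof (intro ballI allI impI)
  fix x e assume x: "x \<in> X" and e: "(e::real) > 0"
  define d where "d = (e / (K + 1)) powr (1 / s)"
  have d0: "d > 0" using e K by (simp add: d_def)
  have ds: "d powr s = e / (K + 1)"
    using e K s by (simp add: d_def powr_powr)
  show "\<exists>d>0. \<forall>x'\<in>X. dist x' x < d \<longrightarrow> dist (g x') (g x) < e"
  proof (intro exI[of _ d] conjI ballI impI)
    fix x' assume x': "x' \<in> X" and dx: "dist x' x < d"
    have "dist x' x powr s \<le> d powr s"
      using dx s by (intro powr_mono2) auto
    then have "K * dist x' x powr s \<le> K * (e / (K + 1))"
      using K ds by (intro mult_left_mono) auto
    also have "\<dots> < e"
      using K e by (simp add: field_simps)
    finally show "dist (g x') (g x) < e"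
      using h x x' by (simp add: dist_real_def) (meson le_less_trans)
  qed (fact d0)
qed

definition order_interval_lopen :: "'a rel \<Rightarrow> 'a set \<Rightarrow> 'a \<Rightarrow> 'a \<Rightarrow> 'a set" where
  "order_interval_lopen r X a b = {x\<in>X. (a,x)\<in>r \<and> x \<noteq> a \<and> (x,b)\<in>r}"

definition down_set :: "'a rel \<Rightarrow> 'a set \<Rightarrow> 'a \<Rightarrow> 'a set" where
  "down_set r X x = {y\<in>X. (y,x)\<in>r}"

lemma increment_bound_imp_holder:
  fixes X :: "'a::metric_space set" and g :: "'a \<Rightarrow> real"
  assumes lin: "linear_order_on X r" and mon: "order_monotone r C X" and C: "C \<ge> 0"
    and s: "s > 0" and bX: "bounded X"
    and incr: "\<And>a b. a \<in> X \<Longrightarrow> b \<in> X \<Longrightarrow> (a,b) \<in> r \<Longrightarrow> g a \<le> g b"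
    and jump: "\<And>a b. a \<in> X \<Longrightarrow> b \<in> X \<Longrightarrow> (a,b) \<in> r \<Longrightarrow>
                 g b \<le> g a + diameter (order_interval_lopen r X a b) powr s"
  shows "\<forall>a\<in>X. \<forall>b\<in>X. \<bar>g a - g b\<bar> \<le> C powr s * dist a b powr s"
proof -
  have ordered: "\<bar>g a - g b\<bar> \<le> C powr s * dist a b powr s"
    if ab: "a \<in> X" "b \<in> X" "(a,b)\<in>r" for a b
  proof -
    have sub: "order_interval_lopen r X a b \<subseteq> order_interval r X a b"
      unfolding order_interval_lopen_def order_interval_def by auto
    have bI: "bounded (order_interval r X a b)"
      using bX by (rule bounded_subset) (auto simp: order_interval_def)
    have "diameter (order_interval_lopen r X a b) \<le> diameter (order_interval r X a b)"
      using sub bI by (rule diameter_subset)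
    also have "\<dots> \<le> C * dist a b" using mon ab unfolding order_monotone_def by blast
    finally have "diameter (order_interval_lopen r X a b) powr s \<le> (C * dist a b) powr s"
      using s bounded_subset[OF bI sub] by (intro powr_mono2) (auto simp: diameter_ge_0)
    also have "\<dots> = C powr s * dist a b powr s" using C by (simp add: powr_mult)
    finally show ?thesis using jump[OF ab] incr[OF ab] by linarith
  qed
  show ?thesis
  proof (intro ballI)
    fix a b assume a: "a \<in> X" and b: "b \<in> X"
    show "\<bar>g a - g b\<bar> \<le> C powr s * dist a b powr s"
    proof (cases "(a,b)\<in>r")
      case True then show ?thesis using ordered a b by blast
    next
      case False
      then have "\<bar>g b - g a\<bar> \<le> C powr s * dist b a powr s"
        using ordered linear_order_on_flip[OF lin a b] a b by blast
      then show ?thesis by (simp add: abs_minus_commute dist_commute)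
    qed
  qed
qed

text \<open>Intermediate values for such functions, without any connectedness of X: a missed value t
  would produce a pair a < b with nothing strictly between them in the order and with the whole
  jump g b - g a carried by (a,b] \<subseteq> \{b\}, whose diameter is zero.\<close>

lemma increment_bound_image_interval:
  fixes X :: "'a::metric_space set" and g :: "'a \<Rightarrow> real"
  assumes lin: "linear_order_on X r" and cX: "compact X" and mon: "order_monotone r C X"
    and cont: "continuous_on X g"
    and incr: "\<And>a b. a \<in> X \<Longrightarrow> b \<in> X \<Longrightarrow> (a,b) \<in> r \<Longrightarrow> g a \<le> g b"
    and jump: "\<And>a b. a \<in> X \<Longrightarrow> b \<in> X \<Longrightarrow> (a,b) \<in> r \<Longrightarrow>
                 g b \<le> g a + diameter (order_interval_lopen r X a b) powr s"
    and m0: "m0 \<in> X" "\<forall>y\<in>X. (m0,y)\<in>r" and m1: "m1 \<in> X" "\<forall>y\<in>X. (y,m1)\<in>r"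
  shows "g ` X = {g m0..g m1}"
proof
  show "g ` X \<subseteq> {g m0..g m1}" using incr m0 m1 by auto
next
  note asy = linear_order_onD(4)[OF lin]
  have clX: "closed X" using cX by (rule compact_imp_closed)
  have "t \<in> g ` X" if t: "t \<in> {g m0..g m1}" for t
  proof (rule ccontr)
    assume nt: "t \<notin> g ` X"
    define A where "A = {x\<in>X. g x \<le> t}"
    define B where "B = {x\<in>X. t \<le> g x}"
    have clA: "closed A" unfolding A_def
      by (rule continuous_on_closed_Collect_le[OF cont continuous_on_const clX])
    have clB: "closed B" unfolding B_def
      by (rule continuous_on_closed_Collect_le[OF continuous_on_const cont clX])
    obtain a where a: "a \<in> A" "\<forall>y\<in>A. (y,a)\<in>r"
      using closed_has_greatest[OF lin cX mon clA] m0 t unfolding A_def by auto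
    obtain b where b: "b \<in> B" "\<forall>y\<in>B. (b,y)\<in>r"
      using closed_has_least[OF lin cX mon clB] m1 t unfolding B_def by auto
    have aX: "a \<in> X" and bX: "b \<in> X" using a b unfolding A_def B_def by auto
    have gat: "g a < t" using a nt aX unfolding A_def by force
    have gbt: "t < g b" using b nt bX unfolding B_def by force
    have ab: "(a,b)\<in>r"
    proof (rule ccontr)
      assume "(a,b)\<notin>r"
      then have "g b \<le> g a" using incr linear_order_on_flip[OF lin aX bX] aX bX by blast
      then show False using gat gbt by simp
    qed
    have gap: "order_interval_lopen r X a b \<subseteq> {b}"
    proof
      fix x assume "x \<in> order_interval_lopen r X a b"
      then have xX: "x \<in> X" and ax: "(a,x)\<in>r" and xa: "x \<noteq> a" and xb: "(x,b)\<in>r"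
        unfolding order_interval_lopen_def by auto
      show "x \<in> {b}"
      proof (cases "g x \<le> t")
        case True
        then have "(x,a)\<in>r" using a xX unfolding A_def by blast
        then show ?thesis using ax xa asy unfolding antisym_def by blast
      next
        case False
        then have "(b,x)\<in>r" using b xX unfolding B_def by simp
        then show ?thesis using xb asy unfolding antisym_def by blast
      qed
    qed
    have "diameter (order_interval_lopen r X a b) \<le> diameter {b}"
      using gap by (rule diameter_subset) simp
    moreover have "diameter (order_interval_lopen r X a b) \<ge> 0"
      using bounded_subset[OF _ gap] by (intro diameter_ge_0) simp
    ultimately have "g b \<le> g a" using jump[OF aX bX ab] by simp
    then show False using gat gbt by simp
  qed
  then show "{g m0..g m1} \<subseteq> g ` X" by blast
qed

section \<open>The distribution function of the Hausdorff content\<close>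

definition content_distribution :: "real \<Rightarrow> 'a rel \<Rightarrow> 'a::metric_space set \<Rightarrow> 'a \<Rightarrow> real" where
  "content_distribution s r X x = enn2real (hausdorff_pre s (diameter X) (down_set r X x))"

text \<open>At the scale diam X the set X itself is an admissible cover, so the content of every subset
  of a bounded X is finite and the distribution function loses no information.\<close>

lemma hausdorff_pre_finite:
  assumes "bounded X" "A \<subseteq> X"
  shows "hausdorff_pre s (diameter X) A < top"
proof -
  have "hausdorff_pre s (diameter X) A \<le> hausdorff_pre s (diameter X) X"
    by (rule hausdorff_pre_mono[OF assms(2)])
  also have "\<dots> \<le> ennreal (diameter X powr s)"
    by (rule hausdorff_pre_le_diameter[OF assms(1)]) simp
  finally show ?thesis using ennreal_less_top le_less_trans by blast
qed

lemma content_distribution_eq: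
  assumes "bounded X"
  shows "hausdorff_pre s (diameter X) (down_set r X x) = ennreal (content_distribution s r X x)"
  using hausdorff_pre_finite[OF assms, of "down_set r X x" s]
  unfolding content_distribution_def down_set_def by simp

lemma content_distribution_mono:
  assumes lin: "linear_order_on X r" and bX: "bounded X" and ab: "(a,b) \<in> r"
  shows "content_distribution s r X a \<le> content_distribution s r X b"
proof -
  have "down_set r X a \<subseteq> down_set r X b"
    unfolding down_set_def using transD[OF linear_order_onD(1)[OF lin] _ ab] by auto
  then show ?thesis
    unfolding content_distribution_def
    by (rule enn2real_mono[OF hausdorff_pre_mono hausdorff_pre_finite[OF bX]])
      (simp add: down_set_def subset_iff)
qed

text \<open>The down-set of b is covered by the down-set of a and the interval (a,b]; this yields the
  increment bound.\<close>

lemma content_distribution_increment: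
  assumes lin: "linear_order_on X r" and bX: "bounded X"
    and ab: "a \<in> X" "b \<in> X" "(a,b) \<in> r"
  shows "content_distribution s r X b
           \<le> content_distribution s r X a + diameter (order_interval_lopen r X a b) powr s"
proof -
  let ?\<nu> = "hausdorff_pre s (diameter X)" and ?g = "content_distribution s r X"
  let ?H = "order_interval_lopen r X a b"
  have sub: "down_set r X b \<subseteq> down_set r X a \<union> ?H"
  proof
    fix y assume "y \<in> down_set r X b"
    then have y: "y \<in> X" "(y,b) \<in> r" unfolding down_set_def by auto
    show "y \<in> down_set r X a \<union> ?H"
    proof (cases "(y,a) \<in> r")
      case True then show ?thesis using y unfolding down_set_def by simp
    next
      case False
      then have "(a,y) \<in> r" "y \<noteq> a"
        using linear_order_on_flip[OF lin y(1) ab(1)] linear_order_onD(2)[OF lin] ab(1) by auto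
      then show ?thesis using y unfolding order_interval_lopen_def by simp
    qed
  qed
  have HX: "?H \<subseteq> X" unfolding order_interval_lopen_def by auto
  have g0: "?g a \<ge> 0" by (simp add: content_distribution_def)
  have "?\<nu> (down_set r X b) \<le> ?\<nu> (down_set r X a \<union> ?H)" by (rule hausdorff_pre_mono[OF sub])
  also have "\<dots> \<le> ?\<nu> (down_set r X a) + ennreal (diameter ?H powr s)"
    using bounded_subset[OF bX HX] diameter_subset[OF HX bX] by (rule hausdorff_pre_union_le)
  also have "\<dots> = ennreal (?g a + diameter ?H powr s)"
    using g0 by (simp add: content_distribution_eq[OF bX] ennreal_plus)
  finally have "ennreal (?g b) \<le> ennreal (?g a + diameter ?H powr s)"
    by (simp only: content_distribution_eq[OF bX])
  then show ?thesis using g0 ennreal_le_iff[of "?g a + diameter ?H powr s"] by simp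
qed

text \<open>The distribution function starts at 0 (the down-set of the least point is a singleton) and
  ends at the positive total content of X.\<close>

lemma content_distribution_least:
  assumes lin: "linear_order_on X r" and bX: "bounded X"
    and m0: "m0 \<in> X" "\<forall>y\<in>X. (m0,y)\<in>r"
  shows "content_distribution s r X m0 = 0"
proof -
  have "down_set r X m0 \<subseteq> {m0}"
    using m0 linear_order_onD(4)[OF lin] unfolding down_set_def antisym_def by auto
  then have "hausdorff_pre s (diameter X) (down_set r X m0) \<le> hausdorff_pre s (diameter X) {m0}"
    by (rule hausdorff_pre_mono)
  also have "\<dots> \<le> ennreal (diameter {m0} powr s)"
    by (rule hausdorff_pre_le_diameter) (auto simp: diameter_ge_0 bX)
  finally show ?thesis unfolding content_distribution_def by simp
qed

lemma content_distribution_greatest: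
  assumes bX: "bounded X" and pos: "hausdorff_pre s (diameter X) X > 0"
    and m1: "\<forall>y\<in>X. (y,m1)\<in>r"
  shows "content_distribution s r X m1 > 0"
proof -
  have "down_set r X m1 = X" using m1 unfolding down_set_def by auto
  then show ?thesis
    using pos hausdorff_pre_finite[OF bX order_refl, of s]
    unfolding content_distribution_def by (simp add: enn2real_positive_iff)
qed

theorem theorem2p1:
  fixes X :: "'a::metric_space set" and s :: real
  assumes "s > 0" and "compact X" and "monotone_metric X"
    and "hausdorff_measure s X > 0"
  shows "\<exists>g :: 'a \<Rightarrow> real. holder_on s X g \<and> (\<exists>c e. c < e \<and> g ` X = {c..e})"
proof -
  note s = assms(1) and cX = assms(2)
  obtain r C where lin: "linear_order_on X r" and C: "C \<ge> 0" and mon: "order_monotone r C X"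
    using assms(3) by (rule monotone_metricE)
  have bX: "bounded X" using cX by (rule compact_imp_bounded)
  have pos: "hausdorff_pre s (diameter X) X > 0" using s assms(4) by (rule hausdorff_pre_pos)
  then have Xne: "X \<noteq> {}" using hausdorff_pre_empty[of 0 s, where 'a='a] by auto
  note extremum = lin cX mon compact_imp_closed[OF cX] order_refl Xne
  obtain m0 where m0: "m0 \<in> X" "\<forall>y\<in>X. (m0,y)\<in>r" using closed_has_least[OF extremum] by blast
  obtain m1 where m1: "m1 \<in> X" "\<forall>y\<in>X. (y,m1)\<in>r" using closed_has_greatest[OF extremum] by blast
  define g where "g = content_distribution s r X"
  have incr: "\<And>a b. a \<in> X \<Longrightarrow> b \<in> X \<Longrightarrow> (a,b) \<in> r \<Longrightarrow> g a \<le> g b"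
    unfolding g_def using content_distribution_mono[OF lin bX] by blast
  have jump: "\<And>a b. a \<in> X \<Longrightarrow> b \<in> X \<Longrightarrow> (a,b) \<in> r \<Longrightarrow>
                 g b \<le> g a + diameter (order_interval_lopen r X a b) powr s"
    unfolding g_def by (rule content_distribution_increment[OF lin bX])
  have hol: "\<forall>a\<in>X. \<forall>b\<in>X. \<bar>g a - g b\<bar> \<le> C powr s * dist a b powr s"
    by (rule increment_bound_imp_holder[OF lin mon C s bX incr jump])
  have "g ` X = {g m0..g m1}"
    using holder_imp_continuous_on[OF s _ hol]
    by (intro increment_bound_image_interval[OF lin cX mon _ incr jump m0 m1]) simp
  moreover have "g m0 < g m1"
    using content_distribution_least[OF lin bX m0] content_distribution_greatest[OF bX pos m1(2)]
    unfolding g_def by simp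
  ultimately show ?thesis unfolding holder_on_def using hol by blast
qed

end
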